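(* Let $\delta$ satisfy the Kalmanson conditions with respect to $\pi=(x_1,\dots,x_n)$, and let $i<x<y<z<j<t$ be indices in $\{1,\dots,n\}$. Writing $\delta_{ab}(c)=\delta(x_a,x_c)+\delta(x_b,x_c)-\delta(x_a,x_b)$, we have \[\delta_{xy}(z)+\delta_{xz}(y)+\delta_{yz}(x)+\delta_{xy}(t)+\delta_{xz}(t)+\delta_{yz}(t)\ \ge\ 3\delta_{ij}(t)+\delta_{ij}(x)+\delta_{ij}(y)+\delta_{ij}(z).\]
   Context: $X=\{1,\dots,n\}$. A dissimilarity map is $\delta:X\times X\to\mathbb{R}$ with $\delta(i,j)=\delta(j,i)\ge0$, $\delta(i,i)=0$. A circular ordering is a listing $\pi=(x_1,\dots,x_n)$ of $X$ regarded cyclically. $\delta$ satisfies the Kalmanson conditions with respect to $\pi$ if for all $1\le i<j<k<l\le n$: $\delta(x_i,x_j)+\delta(x_k,x_l)\le\delta(x_i,x_k)+\delta(x_j,x_l)$ and $\delta(x_i,x_l)+\delta(x_j,x_k)\le\delta(x_i,x_k)+\delta(x_j,x_l)$. *)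

theory Defs
  imports Complex_Main
begin

definition dissimilarity :: "nat \<Rightarrow> (nat \<Rightarrow> nat \<Rightarrow> real) \<Rightarrow> bool" where
  "dissimilarity n \<delta> \<longleftrightarrow>
     (\<forall>a\<in>{1..n}. \<forall>b\<in>{1..n}. \<delta> a b = \<delta> b a \<and> \<delta> a b \<ge> 0) \<and>
     (\<forall>a\<in>{1..n}. \<delta> a a = 0)"

text \<open>A circular ordering (x_1,...,x_n) of X is given by the listing map pi with pi k = x_k,
  a bijection of {1..n} onto X.\<close>
definition circular_ordering :: "nat \<Rightarrow> (nat \<Rightarrow> nat) \<Rightarrow> bool" where
  "circular_ordering n \<pi> \<longleftrightarrow> bij_betw \<pi> {1..n} {1..n}"

definition kalmanson :: "nat \<Rightarrow> (nat \<Rightarrow> nat \<Rightarrow> real) \<Rightarrow> (nat \<Rightarrow> nat) \<Rightarrow> bool" where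
  "kalmanson n \<delta> \<pi> \<longleftrightarrow>
     (\<forall>i j k l. 1 \<le> i \<and> i < j \<and> j < k \<and> k < l \<and> l \<le> n \<longrightarrow>
        \<delta> (\<pi> i) (\<pi> j) + \<delta> (\<pi> k) (\<pi> l) \<le> \<delta> (\<pi> i) (\<pi> k) + \<delta> (\<pi> j) (\<pi> l) \<and>
        \<delta> (\<pi> i) (\<pi> l) + \<delta> (\<pi> j) (\<pi> k) \<le> \<delta> (\<pi> i) (\<pi> k) + \<delta> (\<pi> j) (\<pi> l))"

definition dlt :: "(nat \<Rightarrow> nat \<Rightarrow> real) \<Rightarrow> (nat \<Rightarrow> nat) \<Rightarrow> nat \<Rightarrow> nat \<Rightarrow> nat \<Rightarrow> real" where
  "dlt \<delta> \<pi> a b c = \<delta> (\<pi> a) (\<pi> c) + \<delta> (\<pi> b) (\<pi> c) - \<delta> (\<pi> a) (\<pi> b)"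

end

theory Submission
  imports Defs
begin

(* Write d(a,b) for delta(x_a, x_b). By symmetry of delta the left-hand side collapses to
   2 (d(x,t) + d(y,t) + d(z,t)). For each w in {x,y,z} the quadruple i < w < j < t gives two
   Kalmanson inequalities whose sum reads delta_ij(w) + delta_ij(t) <= 2 d(w,t); summing over w
   yields the right-hand side. *)

lemma dissimilarity_circular_ordering_sym:
  assumes "dissimilarity n \<delta>" and "circular_ordering n \<pi>"
    and "a \<in> {1..n}" and "b \<in> {1..n}"
  shows "\<delta> (\<pi> a) (\<pi> b) = \<delta> (\<pi> b) (\<pi> a)"
proof -
  have "\<pi> a \<in> {1..n}" and "\<pi> b \<in> {1..n}"
    using assms(2-4) unfolding circular_ordering_def bij_betw_def by auto
  then show ?thesis
    using assms(1) unfolding dissimilarity_def by blast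
qed

lemma dlt_six_sum_eq:
  assumes "\<delta> (\<pi> y) (\<pi> x) = \<delta> (\<pi> x) (\<pi> y)"
    and "\<delta> (\<pi> z) (\<pi> x) = \<delta> (\<pi> x) (\<pi> z)"
    and "\<delta> (\<pi> z) (\<pi> y) = \<delta> (\<pi> y) (\<pi> z)"
  shows "dlt \<delta> \<pi> x y z + dlt \<delta> \<pi> x z y + dlt \<delta> \<pi> y z x
           + dlt \<delta> \<pi> x y t + dlt \<delta> \<pi> x z t + dlt \<delta> \<pi> y z t
         = 2 * (\<delta> (\<pi> x) (\<pi> t) + \<delta> (\<pi> y) (\<pi> t) + \<delta> (\<pi> z) (\<pi> t))"
  using assms unfolding dlt_def by simp

lemma kalmanson_dlt_le:
  assumes "kalmanson n \<delta> \<pi>"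
    and "\<delta> (\<pi> w) (\<pi> j) = \<delta> (\<pi> j) (\<pi> w)"
    and "1 \<le> i" and "i < w" and "w < j" and "j < t" and "t \<le> n"
  shows "dlt \<delta> \<pi> i j w + dlt \<delta> \<pi> i j t \<le> 2 * \<delta> (\<pi> w) (\<pi> t)"
proof -
  have "\<delta> (\<pi> i) (\<pi> w) + \<delta> (\<pi> j) (\<pi> t) \<le> \<delta> (\<pi> i) (\<pi> j) + \<delta> (\<pi> w) (\<pi> t)"
    and "\<delta> (\<pi> i) (\<pi> t) + \<delta> (\<pi> w) (\<pi> j) \<le> \<delta> (\<pi> i) (\<pi> j) + \<delta> (\<pi> w) (\<pi> t)"
    using assms(1,3-7) unfolding kalmanson_def by blast+
  then show ?thesis
    using assms(2) unfolding dlt_def by linarith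
qed

theorem mainTheorem9:
  fixes n :: nat and \<delta> :: "nat \<Rightarrow> nat \<Rightarrow> real" and \<pi> :: "nat \<Rightarrow> nat"
    and i x y z j t :: nat
  assumes "dissimilarity n \<delta>"
    and "circular_ordering n \<pi>"
    and "kalmanson n \<delta> \<pi>"
    and "1 \<le> i" and "i < x" and "x < y" and "y < z" and "z < j" and "j < t" and "t \<le> n"
  shows "dlt \<delta> \<pi> x y z + dlt \<delta> \<pi> x z y + dlt \<delta> \<pi> y z x
           + dlt \<delta> \<pi> x y t + dlt \<delta> \<pi> x z t + dlt \<delta> \<pi> y z t
         \<ge> 3 * dlt \<delta> \<pi> i j t + dlt \<delta> \<pi> i j x + dlt \<delta> \<pi> i j y + dlt \<delta> \<pi> i j z"
proof -
  have sym: "\<delta> (\<pi> a) (\<pi> b) = \<delta> (\<pi> b) (\<pi> a)" if "a \<in> {x, y, z, j}" "b \<in> {x, y, z, j}" for a b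
    using dissimilarity_circular_ordering_sym[OF assms(1,2)] that assms(4-10) by auto
  have apex: "dlt \<delta> \<pi> i j w + dlt \<delta> \<pi> i j t \<le> 2 * \<delta> (\<pi> w) (\<pi> t)" if "w \<in> {x, y, z}" for w
    using kalmanson_dlt_le[OF assms(3) sym, of w] that assms(4-10) by auto
  have "dlt \<delta> \<pi> x y z + dlt \<delta> \<pi> x z y + dlt \<delta> \<pi> y z x
           + dlt \<delta> \<pi> x y t + dlt \<delta> \<pi> x z t + dlt \<delta> \<pi> y z t
         = 2 * (\<delta> (\<pi> x) (\<pi> t) + \<delta> (\<pi> y) (\<pi> t) + \<delta> (\<pi> z) (\<pi> t))"
    by (rule dlt_six_sum_eq) (simp_all add: sym)
  with apex[of x] apex[of y] apex[of z] show ?thesis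
    by simp
qed

end
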